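(* Let $J$ be a nonempty basic cylinder in $M_a$ and $p=(p_1,p_2,\dots)\in J$. Then for each $i\in\mathbb N$: $i\notin\Lambda(J)$ if and only if $x_i=p_i$ for all $x=(x_1,x_2,\dots)\in\mathrm{GS}(J,p)$.
   Context: Let $a=\{a_i\}$ be a sequence of positive reals with $\sum_i a_i^2<\infty$, $M_a=\{x\in\mathbb{R}^{\mathbb N}:\sum_i a_i^2x_i^2<\infty\}$ with inner product $\langle x,y\rangle_a=\sum_i a_i^2x_iy_i$ and norm $\|\cdot\|_a$. $e_i$ denotes the sequence with $1$ in position $i$ and $0$ elsewhere. For nonempty $E\subset M_a$, $\Lambda(E)$ is the set of $i$ for which there exist $x\in E$ and $\alpha\ne0$ with $x+\alpha e_i\in E$. For $p\in E$, $\mathrm{GS}(E,p)=\{p+\sum_i\alpha_i(x_i-p)\in M_a: x_i\in E,\ \alpha_i\in\mathbb R\}$, the index running over a finite or countable subset of $\mathbb N$, infinite sums being $\|\cdot\|_a$-limits of partial sums. A basic cylinder is a set $J=\prod_{i=1}^\infty J_i$ where, for some $n\in\mathbb N$ and pairwise disjoint $\Lambda_1,\dots,\Lambda_4\subset\{1,\dots,n\}$: $J_i=[0,p_{2i}]$ ($i\in\Lambda_1$), $[p_{1i},p_{2i}]$ ($i\in\Lambda_2$), $[p_{1i},1]$ ($i\in\Lambda_3$), $\{p_{1i}\}$ ($i\in\Lambda_4$), $[0,1]$ otherwise, with $0<p_{1i}<p_{2i}<1$ for $i\in\Lambda_1\cup\Lambda_2\cup\Lambda_3$ and $0\le p_{1i}\le1$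 for $i\in\Lambda_4$. *)

theory Defs
  imports "HOL-Analysis.Analysis"
begin

text \<open>Sequences are functions nat => real; indices are 0-based (paper's index i+1 is our i).\<close>

definition Ma :: "(nat \<Rightarrow> real) \<Rightarrow> (nat \<Rightarrow> real) set" where
  "Ma a = {x. summable (\<lambda>i. (a i)\<^sup>2 * (x i)\<^sup>2)}"

definition norm_a :: "(nat \<Rightarrow> real) \<Rightarrow> (nat \<Rightarrow> real) \<Rightarrow> real" where
  "norm_a a x = sqrt (\<Sum>i. (a i)\<^sup>2 * (x i)\<^sup>2)"

definition unitseq :: "nat \<Rightarrow> (nat \<Rightarrow> real)" where
  "unitseq i = (\<lambda>j. if j = i then 1 else 0)"

definition Lambda :: "(nat \<Rightarrow> real) set \<Rightarrow> nat set" where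
  "Lambda E = {i. \<exists>x\<in>E. \<exists>\<alpha>::real. \<alpha> \<noteq> 0 \<and> (\<lambda>j. x j + \<alpha> * unitseq i j) \<in> E}"

text \<open>GS(E,p): points p + sum alpha_i (x_i - p) in M_a, where the (finite or countable)
  index set is encoded by allowing alpha_i = 0; the series converges in norm_a.\<close>
definition GS :: "(nat \<Rightarrow> real) \<Rightarrow> (nat \<Rightarrow> real) set \<Rightarrow> (nat \<Rightarrow> real) \<Rightarrow> (nat \<Rightarrow> real) set" where
  "GS a E p = {y \<in> Ma a. \<exists>(xs :: nat \<Rightarrow> nat \<Rightarrow> real) (\<alpha> :: nat \<Rightarrow> real).
      (\<forall>k. xs k \<in> E) \<and>
      (\<lambda>n. norm_a a (\<lambda>j. y j - (p j + (\<Sum>k<n. \<alpha> k * (xs k j - p j))))) \<longlonglongrightarrow> 0}"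

definition basic_cylinder :: "(nat \<Rightarrow> real) set \<Rightarrow> bool" where
  "basic_cylinder J \<longleftrightarrow> (\<exists>(n::nat) L1 L2 L3 L4 (p1::nat \<Rightarrow> real) (p2::nat \<Rightarrow> real).
     L1 \<subseteq> {..<n} \<and> L2 \<subseteq> {..<n} \<and> L3 \<subseteq> {..<n} \<and> L4 \<subseteq> {..<n} \<and>
     L1 \<inter> L2 = {} \<and> L1 \<inter> L3 = {} \<and> L1 \<inter> L4 = {} \<and>
     L2 \<inter> L3 = {} \<and> L2 \<inter> L4 = {} \<and> L3 \<inter> L4 = {} \<and>
     (\<forall>i \<in> L1 \<union> L2 \<union> L3. 0 < p1 i \<and> p1 i < p2 i \<and> p2 i < 1) \<and>
     (\<forall>i \<in> L4. 0 \<le> p1 i \<and> p1 i \<le> 1) \<and>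
     J = {x. \<forall>i. x i \<in>
        (if i \<in> L1 then {0..p2 i}
         else if i \<in> L2 then {p1 i..p2 i}
         else if i \<in> L3 then {p1 i..1}
         else if i \<in> L4 then {p1 i}
         else {0..1})})"

end

theory Submission
  imports Defs
begin

text \<open>Since \<open>a\<^sub>i > 0\<close>, the coordinate functional \<open>x \<mapsto> x\<^sub>i\<close> is bounded by \<open>\<parallel>x\<parallel>\<^sub>a / a\<^sub>i\<close>, hence
  continuous. If every point of \<open>E\<close> has \<open>i\<close>-th coordinate \<open>p\<^sub>i\<close>, so does every partial sum
  \<open>p + \<Sum> \<alpha>\<^sub>k (x\<^sub>k - p)\<close>, and therefore so does its \<open>\<parallel>\<cdot>\<parallel>\<^sub>a\<close>-limit: \<open>GS(E,p)\<close> is fixed in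
  coordinate \<open>i\<close>. For a product set \<open>J\<close> containing \<open>p\<close>, \<open>i \<notin> \<Lambda>(J)\<close> says precisely that
  \<open>J\<close> is fixed in coordinate \<open>i\<close> (otherwise replace \<open>x\<^sub>i\<close> by \<open>p\<^sub>i\<close>); conversely
  \<open>J \<subseteq> GS(J,p)\<close>.\<close>

lemma Ma_add:
  assumes "x \<in> Ma a" "y \<in> Ma a"
  shows "(\<lambda>j. x j + y j) \<in> Ma a"
proof -
  have majorant: "summable (\<lambda>i. 2 * ((a i)\<^sup>2 * (x i)\<^sup>2) + 2 * ((a i)\<^sup>2 * (y i)\<^sup>2))"
    using assms by (intro summable_add summable_mult) (auto simp: Ma_def)
  have bound: "(a i)\<^sup>2 * (x i + y i)\<^sup>2 \<le> 2 * ((a i)\<^sup>2 * (x i)\<^sup>2) + 2 * ((a i)\<^sup>2 * (y i)\<^sup>2)" for i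
  proof -
    have "(x i + y i)\<^sup>2 \<le> 2 * (x i)\<^sup>2 + 2 * (y i)\<^sup>2"
      using zero_le_power2[of "x i - y i"] by (simp add: power2_eq_square algebra_simps)
    then have "(a i)\<^sup>2 * (x i + y i)\<^sup>2 \<le> (a i)\<^sup>2 * (2 * (x i)\<^sup>2 + 2 * (y i)\<^sup>2)"
      by (rule mult_left_mono) simp
    then show ?thesis
      by (simp add: algebra_simps)
  qed
  have "summable (\<lambda>i. (a i)\<^sup>2 * (x i + y i)\<^sup>2)"
    by (rule summable_comparison_test'[OF majorant, of 0]) (use bound in simp)
  then show ?thesis
    by (simp add: Ma_def)
qed

lemma Ma_scale:
  assumes "x \<in> Ma a"
  shows "(\<lambda>j. c * x j) \<in> Ma a"
proof -
  have "summable (\<lambda>i. c\<^sup>2 * ((a i)\<^sup>2 * (x i)\<^sup>2))"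
    using assms by (intro summable_mult) (auto simp: Ma_def)
  then show ?thesis
    by (simp add: Ma_def power_mult_distrib algebra_simps)
qed

lemma Ma_diff:
  assumes "x \<in> Ma a" "y \<in> Ma a"
  shows "(\<lambda>j. x j - y j) \<in> Ma a"
  using Ma_add[OF assms(1) Ma_scale[OF assms(2), of "-1"]] by simp

lemma Ma_sum:
  fixes n :: nat
  assumes "\<And>k. f k \<in> Ma a"
  shows "(\<lambda>j. \<Sum>k<n. f k j) \<in> Ma a"
proof (induction n)
  case 0
  then show ?case by (simp add: Ma_def)
next
  case (Suc n)
  then show ?case using Ma_add[OF Suc assms[of n]] by simp
qed

lemma affine_partial_sum_in_Ma:
  fixes n :: nat and \<alpha> :: "nat \<Rightarrow> real"
  assumes "p \<in> Ma a" "\<And>k. xs k \<in> Ma a"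
  shows "(\<lambda>j. p j + (\<Sum>k<n. \<alpha> k * (xs k j - p j))) \<in> Ma a"
proof -
  have "(\<lambda>j. \<alpha> k * (xs k j - p j)) \<in> Ma a" for k
    using assms by (intro Ma_scale Ma_diff)
  then have "(\<lambda>j. \<Sum>k<n. \<alpha> k * (xs k j - p j)) \<in> Ma a"
    by (rule Ma_sum[of "\<lambda>k j. \<alpha> k * (xs k j - p j)"])
  from Ma_add[OF assms(1) this] show ?thesis .
qed

lemma norm_a_zero [simp]: "norm_a a (\<lambda>j. 0) = 0"
  by (simp add: norm_a_def)

lemma abs_coord_le_norm_a:
  assumes "z \<in> Ma a"
  shows "\<bar>a i\<bar> * \<bar>z i\<bar> \<le> norm_a a z"
proof -
  have "summable (\<lambda>i. (a i)\<^sup>2 * (z i)\<^sup>2)"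
    using assms by (simp add: Ma_def)
  from sum_le_suminf[OF this, of "{i}"]
  have "(a i * z i)\<^sup>2 \<le> (\<Sum>i. (a i)\<^sup>2 * (z i)\<^sup>2)"
    by (simp add: power_mult_distrib)
  then have "sqrt ((a i * z i)\<^sup>2) \<le> norm_a a z"
    unfolding norm_a_def by (rule real_sqrt_le_mono)
  then show ?thesis
    by (simp add: abs_mult)
qed

lemma self_in_GS:
  assumes "x \<in> E" "x \<in> Ma a"
  shows "x \<in> GS a E p"
proof -
  define \<alpha> :: "nat \<Rightarrow> real" where "\<alpha> k = of_bool (k = 0)" for k
  have partial_sums: "(\<lambda>j. x j - (p j + (\<Sum>k<n. \<alpha> k * (x j - p j)))) = (\<lambda>j. 0)"
    if "n \<ge> 1" for n
    using that by (simp add: \<alpha>_def)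
  have "eventually (\<lambda>n. norm_a a (\<lambda>j. x j - (p j + (\<Sum>k<n. \<alpha> k * (x j - p j)))) = 0)
      sequentially"
    using eventually_ge_at_top[of "1::nat"] by eventually_elim (simp add: partial_sums)
  then have "(\<lambda>n. norm_a a (\<lambda>j. x j - (p j + (\<Sum>k<n. \<alpha> k * (x j - p j))))) \<longlonglongrightarrow> 0"
    by (rule tendsto_eventually)
  with assms show ?thesis
    unfolding GS_def by (auto intro!: exI[of _ "\<lambda>_. x"] exI[of _ \<alpha>])
qed

lemma GS_coord_eq:
  assumes "a i \<noteq> 0" "E \<subseteq> Ma a" "p \<in> Ma a"
    and fixed: "\<And>x. x \<in> E \<Longrightarrow> x i = p i"
    and "y \<in> GS a E p"
  shows "y i = p i"
proof -
  obtain xs \<alpha> where y: "y \<in> Ma a" and xs: "\<And>k. xs k \<in> E"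
    and lim: "(\<lambda>n. norm_a a (\<lambda>j. y j - (p j + (\<Sum>k<n. \<alpha> k * (xs k j - p j))))) \<longlonglongrightarrow> 0"
    using \<open>y \<in> GS a E p\<close> unfolding GS_def by blast
  have "\<bar>a i\<bar> * \<bar>y i - p i\<bar> \<le> norm_a a (\<lambda>j. y j - (p j + (\<Sum>k<n. \<alpha> k * (xs k j - p j))))"
    for n
  proof -
    have "(\<lambda>j. y j - (p j + (\<Sum>k<n. \<alpha> k * (xs k j - p j)))) \<in> Ma a"
      using assms xs by (intro Ma_diff[OF y] affine_partial_sum_in_Ma) auto
    from abs_coord_le_norm_a[OF this, of i] show ?thesis
      using fixed[OF xs] by simp
  qed
  then have "\<bar>a i\<bar> * \<bar>y i - p i\<bar> \<le> 0"
    by (intro LIMSEQ_le_const[OF lim]) blast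
  then show ?thesis
    using \<open>a i \<noteq> 0\<close> by (simp add: mult_le_0_iff)
qed

lemma notin_Lambda_if_coord_const:
  assumes "\<And>x. x \<in> E \<Longrightarrow> x i = c"
  shows "i \<notin> Lambda E"
proof
  assume "i \<in> Lambda E"
  then obtain x \<alpha> where "x \<in> E" "\<alpha> \<noteq> 0" and shifted: "(\<lambda>j. x j + \<alpha> * unitseq i j) \<in> E"
    unfolding Lambda_def by blast
  then show False
    using assms[OF \<open>x \<in> E\<close>] assms[OF shifted] by (simp add: unitseq_def)
qed

lemma coord_const_if_notin_Lambda:
  assumes J: "J = {x. \<forall>j. x j \<in> S j}" and "p \<in> J" "i \<notin> Lambda J" "x \<in> J"
  shows "x i = p i"
proof (rule ccontr)
  assume ne: "x i \<noteq> p i"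
  have "(\<lambda>j. x j + (p i - x i) * unitseq i j) = x(i := p i)"
    by (auto simp: unitseq_def)
  moreover have "x(i := p i) \<in> J"
    using \<open>p \<in> J\<close> \<open>x \<in> J\<close> J by auto
  ultimately have "i \<in> Lambda J"
    unfolding Lambda_def using \<open>x \<in> J\<close> ne
    by (intro CollectI bexI[of _ x] exI[of _ "p i - x i"]) auto
  with \<open>i \<notin> Lambda J\<close> show False ..
qed

lemma basic_cylinder_product:
  assumes "basic_cylinder J"
  obtains S where "J = {x. \<forall>j. x j \<in> S j}"
  using assms unfolding basic_cylinder_def by (elim exE conjE) (rule that, assumption)

theorem lemma3p4:
  fixes a :: "nat \<Rightarrow> real" and J :: "(nat \<Rightarrow> real) set" and p :: "nat \<Rightarrow> real" and i :: nat
  assumes "\<And>k. a k > 0"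
    and "summable (\<lambda>k. (a k)\<^sup>2)"
    and "basic_cylinder J"
    and "J \<subseteq> Ma a"
    and "J \<noteq> {}"
    and "p \<in> J"
  shows "i \<notin> Lambda J \<longleftrightarrow> (\<forall>x \<in> GS a J p. x i = p i)"
proof
  assume "i \<notin> Lambda J"
  obtain S where "J = {x. \<forall>j. x j \<in> S j}"
    using \<open>basic_cylinder J\<close> by (rule basic_cylinder_product)
  then have "x i = p i" if "x \<in> J" for x
    using coord_const_if_notin_Lambda \<open>p \<in> J\<close> \<open>i \<notin> Lambda J\<close> that by blast
  moreover have "a i \<noteq> 0" "p \<in> Ma a"
    using assms(1)[of i] \<open>J \<subseteq> Ma a\<close> \<open>p \<in> J\<close> by auto
  ultimately show "\<forall>x \<in> GS a J p. x i = p i"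
    using GS_coord_eq[of a i J p] \<open>J \<subseteq> Ma a\<close> by blast
next
  assume "\<forall>x \<in> GS a J p. x i = p i"
  then have "x i = p i" if "x \<in> J" for x
    using self_in_GS[OF that] \<open>J \<subseteq> Ma a\<close> that by blast
  then show "i \<notin> Lambda J"
    by (rule notin_Lambda_if_coord_const)
qed

end
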